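(* Let $(D,s,t,k)$ be a reduced instance of Rooted $k$-Distinct Branchings, let $(\hat T,\{B_x\})$ be the $s$-rooted cut decomposition of $D$, and let $\hat P=x_1\dots x_\ell$ be a degenerate path of $\hat T$ with $t\notin V(\hat P)$. Let $Y\subseteq V(\hat P)$ be the set of tails of arcs in $A^0$. If $(D,s,t,k)$ is not a positive instance, then $|Y|<k$.
   Context: Digraphs are finite and without loops; paths are directed. An out-tree (in-tree) is an oriented tree with exactly one vertex of in-degree zero (out-degree zero), its root; an out-branching (in-branching) of $D$ is a spanning out-tree (in-tree). An instance $(D,s,t,k)$ of Rooted $k$-Distinct Branchings ($D$ a digraph, $s,t\in V(D)$, $k$ an integer) is positive if $D$ has an out-branching $T^+$ rooted at $s$ and an in-branching $T^-$ rooted at $t$ with $|A(T^+)\setminus A(T^-)|\ge k$. It is reduced if $D$ has an out-branching rooted at $s$, an in-branching rooted at $t$, and every arc of $D$ lies in some out-branching rooted at $s$ or in some in-branching rooted at $t$. A vertex $v$ is bi-reachable from $r$ if there are two internally vertex-disjoint directed paths from $r$ to $v$. For a digraph $H$ with at least two vertices and $r\in V(H)$ such that every vertex of $H$ is reachable from $r$, the diblock $B_r$ of $r$ in $H$ is the set of all vertices bi-reachable from $r$, together with $r$ and all out-neighbours of $r$. For $x\in B_r\setminus\{r\}$ let $X_x$ be the set of vertices $v\notin B_r$ such that every directed $r$–$v$ path intersects $B_r$ for the last time in $x$; $x$ is a bottleneck of $B_r$ if $X_x\ne\emptyset$. The $r$-rooted cut decomposition $(\hat T,\{B_x\}_{x\in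 V(\hat T)})$ of $H$ is defined recursively: $\hat T$ is a rooted tree with root $r$; the set associated with the root is $B_r$; the children of $r$ are the bottlenecks of $B_r$; for each bottleneck $x$, the subtree rooted at $x$ with its sets is the $x$-rooted cut decomposition of $H[X_x\cup\{x\}]$. $B_x$ is degenerate if $x$ is an internal node of $\hat T$ and $|B_x|=2$. A path $x_1\dots x_\ell$ in $\hat T$ is degenerate if it is a subpath of a root-to-leaf path of $\hat T$ (with $x_{i+1}$ a child of $x_i$) and every $B_{x_i}$ is degenerate. For such a path $\hat P$, $A^0$ is the set of arcs $x_jx_i$ of $D$ with $j>i$. *)

theory Defs
  imports Main
begin

type_synonym 'a dg = "'a set \<times> ('a \<times> 'a) set"

abbreviation verts :: "'a dg \<Rightarrow> 'a set" where "verts G \<equiv> fst G"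
abbreviation arcs :: "'a dg \<Rightarrow> ('a \<times> 'a) set" where "arcs G \<equiv> snd G"

definition wf_digraph :: "'a dg \<Rightarrow> bool" where
  "wf_digraph G \<longleftrightarrow> finite (verts G) \<and> arcs G \<subseteq> verts G \<times> verts G
     \<and> (\<forall>v. (v, v) \<notin> arcs G)"

definition dpath :: "'a dg \<Rightarrow> 'a list \<Rightarrow> 'a \<Rightarrow> 'a \<Rightarrow> bool" where
  "dpath G p u v \<longleftrightarrow> p \<noteq> [] \<and> hd p = u \<and> last p = v \<and> distinct p \<and> set p \<subseteq> verts G
     \<and> (\<forall>i. Suc i < length p \<longrightarrow> (p ! i, p ! Suc i) \<in> arcs G)"

definition out_branching :: "'a dg \<Rightarrow> 'a \<Rightarrow> ('a \<times> 'a) set \<Rightarrow> bool" where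
  "out_branching G r T \<longleftrightarrow> r \<in> verts G \<and> T \<subseteq> arcs G
     \<and> (\<forall>u. (u, r) \<notin> T)
     \<and> (\<forall>v \<in> verts G. v \<noteq> r \<longrightarrow> (\<exists>!u. (u, v) \<in> T))
     \<and> (\<forall>v \<in> verts G. \<exists>p. dpath (verts G, T) p r v)"

definition in_branching :: "'a dg \<Rightarrow> 'a \<Rightarrow> ('a \<times> 'a) set \<Rightarrow> bool" where
  "in_branching G r T \<longleftrightarrow> r \<in> verts G \<and> T \<subseteq> arcs G
     \<and> (\<forall>u. (r, u) \<notin> T)
     \<and> (\<forall>v \<in> verts G. v \<noteq> r \<longrightarrow> (\<exists>!u. (v, u) \<in> T))
     \<and> (\<forall>v \<in> verts G. \<exists>p. dpath (verts G, T) p v r)"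

definition positive_instance :: "'a dg \<Rightarrow> 'a \<Rightarrow> 'a \<Rightarrow> int \<Rightarrow> bool" where
  "positive_instance D s t k \<longleftrightarrow>
     (\<exists>Tp Tm. out_branching D s Tp \<and> in_branching D t Tm \<and> int (card (Tp - Tm)) \<ge> k)"

definition reduced_instance :: "'a dg \<Rightarrow> 'a \<Rightarrow> 'a \<Rightarrow> int \<Rightarrow> bool" where
  "reduced_instance D s t k \<longleftrightarrow>
     (\<exists>T. out_branching D s T) \<and> (\<exists>T. in_branching D t T)
     \<and> (\<forall>a \<in> arcs D. (\<exists>T. out_branching D s T \<and> a \<in> T) \<or> (\<exists>T. in_branching D t T \<and> a \<in> T))"

definition bireachable :: "'a dg \<Rightarrow> 'a \<Rightarrow> 'a \<Rightarrow> bool" where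
  "bireachable H r v \<longleftrightarrow> (\<exists>p q. dpath H p r v \<and> dpath H q r v \<and> p \<noteq> q
     \<and> set p \<inter> set q \<subseteq> {r, v})"

definition diblock :: "'a dg \<Rightarrow> 'a \<Rightarrow> 'a set" where
  "diblock H r = {v \<in> verts H. bireachable H r v} \<union> {r} \<union> {v. (r, v) \<in> arcs H}"

definition Xset :: "'a dg \<Rightarrow> 'a \<Rightarrow> 'a \<Rightarrow> 'a set" where
  "Xset H r x = {v \<in> verts H - diblock H r.
      \<forall>p. dpath H p r v \<longrightarrow> last (filter (\<lambda>y. y \<in> diblock H r) p) = x}"

definition bottleneck :: "'a dg \<Rightarrow> 'a \<Rightarrow> 'a \<Rightarrow> bool" where
  "bottleneck H r x \<longleftrightarrow> x \<in> diblock H r - {r} \<and> Xset H r x \<noteq> {}"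

definition induced :: "'a dg \<Rightarrow> 'a set \<Rightarrow> 'a dg" where
  "induced H S = (S, {(u, v) \<in> arcs H. u \<in> S \<and> v \<in> S})"

text \<open>Nodes of the s-rooted cut decomposition of D: node x together with the digraph H
  whose x-rooted cut decomposition is the subtree at x (so B_x = diblock H x).\<close>
inductive cd_node :: "'a dg \<Rightarrow> 'a \<Rightarrow> 'a \<Rightarrow> 'a dg \<Rightarrow> bool" for D s where
  root: "cd_node D s s D"
| child: "cd_node D s x H \<Longrightarrow> bottleneck H x y \<Longrightarrow> cd_node D s y (induced H (Xset H x y \<union> {y}))"

definition cd_child :: "'a dg \<Rightarrow> 'a \<Rightarrow> 'a \<Rightarrow> 'a \<Rightarrow> bool" where
  "cd_child D s x y \<longleftrightarrow> (\<exists>H. cd_node D s x H \<and> bottleneck H x y)"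

definition cd_degenerate :: "'a dg \<Rightarrow> 'a \<Rightarrow> 'a \<Rightarrow> bool" where
  "cd_degenerate D s x \<longleftrightarrow> (\<exists>H. cd_node D s x H \<and> (\<exists>y. bottleneck H x y) \<and> card (diblock H x) = 2)"

definition degenerate_path :: "'a dg \<Rightarrow> 'a \<Rightarrow> 'a list \<Rightarrow> bool" where
  "degenerate_path D s xs \<longleftrightarrow> xs \<noteq> []
     \<and> (\<forall>i. Suc i < length xs \<longrightarrow> cd_child D s (xs ! i) (xs ! Suc i))
     \<and> (\<forall>i < length xs. cd_degenerate D s (xs ! i))"

definition A0_tails :: "'a dg \<Rightarrow> 'a list \<Rightarrow> 'a set" where
  "A0_tails D xs = {xs ! j | j. j < length xs \<and> (\<exists>i < j. (xs ! j, xs ! i) \<in> arcs D)}"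

end

theory Submission
  imports Defs
begin

text \<open>In the cut decomposition the digraph attached to a node x is D restricted to the vertices
  dominated by x (those every path from s passes through x), and a degenerate node x has a single
  out-neighbour c inside its dominated set. For each tail u of an arc of A^0 the arc from u to this
  c lies in every out-branching rooted at s. On the other hand every vertex reaches t without these
  arcs: a backward arc x_j x_i lies in no out-branching, so by reducedness it lies in an
  in-branching, which leads from x_i to t avoiding x_j; choosing j minimal, such a path never needs
  a forced arc. An in-branching avoiding all of them differs from any out-branching in at least |Y|
  arcs, so |Y| \<ge> k would make the instance positive.\<close>

lemma rtrancl_Restr_mono:
  "(a, b) \<in> (Restr E S)\<^sup>* \<Longrightarrow> E \<subseteq> E' \<Longrightarrow> S \<subseteq> S' \<Longrightarrow> (a, b) \<in> (Restr E' S')\<^sup>*"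
  using rtrancl_mono[of "Restr E S" "Restr E' S'"] by blast

lemma rtrancl_Restr_endpoints: "(a, b) \<in> (Restr E S)\<^sup>* \<Longrightarrow> a = b \<or> a \<in> S \<and> b \<in> S"
  by (induct rule: rtrancl_induct) auto

lemma rtrancl_Restr_first_visit:
  assumes "(a, b) \<in> (Restr E S)\<^sup>*" "a \<noteq> c"
  shows "(a, b) \<in> (Restr E (S - {c}))\<^sup>*
    \<or> (\<exists>u. (a, u) \<in> (Restr E (S - {c}))\<^sup>* \<and> (u, c) \<in> Restr E S)"
  using assms(1)
proof (induct rule: rtrancl_induct)
  case (step w b)
  from step(3) show ?case
  proof
    assume aw: "(a, w) \<in> (Restr E (S - {c}))\<^sup>*"
    show ?case
    proof (cases "b = c")
      case False
      with step(2) rtrancl_Restr_endpoints[OF aw] assms(2) have "(w, b) \<in> Restr E (S - {c})"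
        by auto
      with aw show ?thesis by (meson rtrancl.rtrancl_into_rtrancl)
    qed (use aw step(2) in blast)
  qed blast
qed simp

lemma rtrancl_Restr_last_visit:
  assumes "(a, b) \<in> (Restr E S)\<^sup>*" "b \<noteq> c"
  shows "(a, b) \<in> (Restr E (S - {c}))\<^sup>*
    \<or> (\<exists>w. (c, w) \<in> Restr E S \<and> (w, b) \<in> (Restr E (S - {c}))\<^sup>*)"
  using assms(1)
proof (induct rule: converse_rtrancl_induct)
  case (step a a')
  show ?case
  proof (cases "a = c")
    case False
    from step(3) show ?thesis
    proof
      assume a'b: "(a', b) \<in> (Restr E (S - {c}))\<^sup>*"
      with step(1) False rtrancl_Restr_endpoints[OF a'b] assms(2) have "(a, a') \<in> Restr E (S - {c})"
        by auto
      with a'b show ?thesis by (meson converse_rtrancl_into_rtrancl)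
    qed blast
  qed (use step in blast)
qed simp

lemma rtrancl_crossing_step:
  assumes "(a, b) \<in> R\<^sup>*" "P a" "\<not> P b"
  obtains u w where "(a, u) \<in> R\<^sup>*" "(u, w) \<in> R" "P u" "\<not> P w"
  using assms by (induct arbitrary: thesis rule: rtrancl_induct) blast+

lemma distinct_nth_notin_drop:
  assumes "distinct p" "k < m"
  shows "p ! k \<notin> set (drop m p)"
proof (cases "k < length p")
  case True
  then have "p ! k \<in> set (take m p)" using assms(2) by (auto simp: in_set_conv_nth)
  moreover have "distinct (take m p @ drop m p)" using assms(1) by simp
  ultimately show ?thesis by (auto simp del: append_take_drop_id)
qed (use assms in \<open>simp add: not_less\<close>)

lemma last_filter_eq_nth:
  assumes "k < length p" "P (p ! k)" "\<And>m. k < m \<Longrightarrow> m < length p \<Longrightarrow> \<not> P (p ! m)"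
  shows "last (filter P p) = p ! k"
proof -
  have "filter P (drop (Suc k) p) = []"
    using assms(3) by (auto simp: filter_empty_conv in_set_conv_nth)
  then have "filter P p = filter P (take k p) @ [p ! k]"
    using assms(1,2) id_take_nth_drop[OF assms(1)] by (metis filter.simps(2) filter_append)
  then show ?thesis by simp
qed

lemma dpath_drop:
  assumes "dpath G p a b" "k < length p"
  shows "dpath G (drop k p) (p ! k) b"
  using assms unfolding dpath_def
  by (auto simp: hd_drop_conv_nth dest: set_drop_subset[THEN subsetD])

lemma dpath_Cons:
  assumes "dpath G p w b" "v \<notin> set p" "v \<in> verts G" "(v, w) \<in> arcs G"
  shows "dpath G (v # p) v b"
  using assms unfolding dpath_def
  by (auto simp: hd_conv_nth nth_Cons split: nat.split)

lemma dpath_mono: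
  "dpath G p a b \<Longrightarrow> verts G \<subseteq> verts G' \<Longrightarrow> arcs G \<subseteq> arcs G' \<Longrightarrow> dpath G' p a b"
  unfolding dpath_def by blast

lemma dpath_imp_rtrancl:
  assumes "dpath G p a b" "arcs G \<subseteq> E" "set p \<subseteq> S"
  shows "(a, b) \<in> (Restr E S)\<^sup>*"
proof -
  have steps: "(p ! 0, p ! k) \<in> (Restr E S)\<^sup>*" if "k < length p" for k
    using that
  proof (induct k)
    case (Suc k)
    then have "(p ! k, p ! Suc k) \<in> Restr E S"
      using assms nth_mem[of k p] nth_mem[of "Suc k" p] by (auto simp: dpath_def)
    with Suc show ?case by (meson Suc_lessD rtrancl.rtrancl_into_rtrancl)
  qed simp
  have "p \<noteq> []" "hd p = a" "last p = b" using assms(1) by (auto simp: dpath_def)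
  with steps[of "length p - 1"] show ?thesis by (simp add: hd_conv_nth last_conv_nth)
qed

lemma rtrancl_imp_dpath:
  assumes "(a, b) \<in> (Restr E S)\<^sup>*" "a \<in> S"
  shows "\<exists>p. dpath (S, Restr E S) p a b"
  using assms
proof (induct rule: converse_rtrancl_induct)
  case base
  then show ?case by (auto simp: dpath_def)
next
  case (step a a')
  then obtain p where p: "dpath (S, Restr E S) p a' b" by auto
  show ?case
  proof (cases "a \<in> set p")
    case True
    then obtain k where "k < length p" "p ! k = a" by (auto simp: in_set_conv_nth)
    with dpath_drop[OF p] show ?thesis by metis
  next
    case False
    with dpath_Cons[OF p] step show ?thesis by auto
  qed
qed

lemma induced_eq_Restr: "induced H S = (S, Restr (arcs H) S)"
  by (auto simp: induced_def)

lemma out_branching_reaches: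
  assumes "out_branching D s T" "v \<in> verts D"
  shows "(s, v) \<in> (Restr (arcs D) (verts D))\<^sup>*"
proof -
  obtain p where "dpath (verts D, T) p s v" "T \<subseteq> arcs D"
    using assms unfolding out_branching_def by blast
  then show ?thesis
    using dpath_imp_rtrancl[of "(verts D, T)" p s v "arcs D" "verts D"] by (auto simp: dpath_def)
qed

lemma in_branching_reaches:
  assumes "in_branching D t T" "v \<in> verts D"
  shows "(v, t) \<in> (arcs D)\<^sup>*"
proof -
  obtain p where "dpath (verts D, T) p v t" "T \<subseteq> arcs D"
    using assms unfolding in_branching_def by blast
  then have "(v, t) \<in> (Restr (arcs D) UNIV)\<^sup>*"
    using dpath_imp_rtrancl[of "(verts D, T)" p v t "arcs D" UNIV] by simp
  then show ?thesis by simp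
qed

text \<open>In an in-branching the arc leaving u is the first arc of the branching path from u to the
  root, so the rest of that path leads from the head of the arc to the root without revisiting u.\<close>
lemma in_branching_arc_reach_avoiding:
  assumes T: "in_branching D t T" and uw: "(u, w) \<in> T" and u: "u \<in> verts D"
  shows "(w, t) \<in> (Restr (arcs D) (verts D - {u}))\<^sup>*"
proof -
  have TE: "T \<subseteq> arcs D" and ut: "u \<noteq> t"
    using T uw unfolding in_branching_def by blast+
  then have out: "\<exists>!w. (u, w) \<in> T"
    using T u unfolding in_branching_def by blast
  obtain q where q: "dpath (verts D, T) q u t"
    using T u unfolding in_branching_def by blast
  then have q0: "q ! 0 = u" and lq: "Suc 0 < length q"
    using ut by (auto simp: dpath_def hd_conv_nth neq_Nil_conv split: if_splits)
  with q have "(u, q ! 1) \<in> T" by (auto simp: dpath_def)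
  with out uw have q1: "q ! 1 = w" by blast
  have "dpath (verts D, T) (drop 1 q) w t" using dpath_drop[OF q, of 1] lq q1 by simp
  moreover have "set (drop 1 q) \<subseteq> verts D - {u}"
    using q distinct_nth_notin_drop[of q 0 1] q0 set_drop_subset[of 1 q] by (auto simp: dpath_def)
  ultimately show ?thesis using TE dpath_imp_rtrancl[of "(verts D, T)"] by auto
qed

text \<open>Following a shortest path towards t from every vertex yields an in-branching.\<close>
lemma in_branching_exists:
  assumes GE: "G \<subseteq> arcs D" and EV: "arcs D \<subseteq> verts D \<times> verts D" and tV: "t \<in> verts D"
    and reach: "\<And>v. v \<in> verts D \<Longrightarrow> (v, t) \<in> G\<^sup>*"
  shows "\<exists>T. T \<subseteq> G \<and> in_branching D t T"
proof -
  define dist where "dist v = (LEAST n. (v, t) \<in> G ^^ n)" for v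
  have dist: "(v, t) \<in> G ^^ dist v" if "v \<in> verts D" for v
  proof -
    have "\<exists>n. (v, t) \<in> G ^^ n" using reach[OF that] rtrancl_power by blast
    then show ?thesis unfolding dist_def by (rule LeastI_ex)
  qed
  have "\<exists>w. (v, w) \<in> G \<and> dist w < dist v" if v: "v \<in> verts D" and vt: "v \<noteq> t" for v
  proof -
    obtain m where m: "dist v = Suc m"
      using dist[OF v] vt by (cases "dist v") auto
    then obtain w where w: "(v, w) \<in> G" "(w, t) \<in> G ^^ m"
      using dist[OF v] relpow_Suc_D2 by metis
    have "dist w \<le> m" unfolding dist_def using w(2) by (rule Least_le)
    with w m show ?thesis by auto
  qed
  then obtain nxt
    where nxt: "\<And>v. v \<in> verts D \<Longrightarrow> v \<noteq> t \<Longrightarrow> (v, nxt v) \<in> G \<and> dist (nxt v) < dist v"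
    by metis
  define T where "T = {(v, nxt v) | v. v \<in> verts D \<and> v \<noteq> t}"
  have TG: "T \<subseteq> G" using nxt by (auto simp: T_def)
  have path: "\<exists>p. dpath (verts D, T) p v t \<and> (\<forall>u \<in> set p. dist u \<le> dist v)"
    if "v \<in> verts D" for v
    using that
  proof (induct "dist v" arbitrary: v rule: less_induct)
    case less
    show ?case
    proof (cases "v = t")
      case True
      with tV show ?thesis by (auto simp: dpath_def)
    next
      case False
      have w: "(v, nxt v) \<in> G" "dist (nxt v) < dist v" using nxt less.prems False by auto
      then have "nxt v \<in> verts D" using GE EV by auto
      with less w obtain p where p: "dpath (verts D, T) p (nxt v) t" "\<forall>u \<in> set p. dist u \<le> dist (nxt v)"
        by blast
      have "v \<notin> set p" using p(2) w(2) by fastforce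
      moreover have "(v, nxt v) \<in> T" using less.prems False by (auto simp: T_def)
      ultimately have "dpath (verts D, T) (v # p) v t" using dpath_Cons[OF p(1)] less.prems by auto
      with p(2) w(2) show ?thesis by fastforce
    qed
  qed
  have "in_branching D t T"
    unfolding in_branching_def using tV TG GE path by (auto simp: T_def) blast
  with TG show ?thesis by blast
qed

definition dominated :: "'a dg \<Rightarrow> 'a \<Rightarrow> 'a \<Rightarrow> 'a set" where
  "dominated D s x = {v \<in> verts D. v = x \<or> (s, v) \<notin> (Restr (arcs D) (verts D - {x}))\<^sup>*}"

locale rooted_digraph =
  fixes D :: "'a dg" and s :: 'a
  assumes wf: "wf_digraph D" and root_in_verts: "s \<in> verts D"
    and reach: "v \<in> verts D \<Longrightarrow> (s, v) \<in> (Restr (arcs D) (verts D))\<^sup>*"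
begin

abbreviation "V \<equiv> verts D"
abbreviation "E \<equiv> arcs D"
abbreviation "Dom \<equiv> dominated D s"

lemma arc_verts: "(u, w) \<in> E \<Longrightarrow> u \<in> V \<and> w \<in> V"
  using wf by (auto simp: wf_digraph_def)

lemma no_loop: "(u, u) \<notin> E"
  using wf by (auto simp: wf_digraph_def)

lemma finite_arcs: "finite E"
  using wf finite_subset[of E "V \<times> V"] by (auto simp: wf_digraph_def)

lemma mem_dominated: "v \<in> Dom x \<longleftrightarrow> v \<in> V \<and> (v = x \<or> (s, v) \<notin> (Restr E (V - {x}))\<^sup>*)"
  by (simp add: dominated_def)

lemma dominated_subset: "Dom x \<subseteq> V"
  by (auto simp: mem_dominated)

lemma dominated_root: "Dom s = V"
  using rtrancl_Restr_endpoints by (fastforce simp: mem_dominated)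

lemma reach_avoiding_into_dominated:
  assumes "(w, v) \<in> (Restr E (V - {x}))\<^sup>*" "v \<in> Dom x" "w \<in> V"
  shows "w \<in> Dom x"
proof (cases "v = x")
  case True
  with assms rtrancl_Restr_endpoints[OF assms(1)] show ?thesis by auto
next
  case False
  show ?thesis
  proof (rule ccontr)
    assume "w \<notin> Dom x"
    with assms(3) have "(s, w) \<in> (Restr E (V - {x}))\<^sup>*" by (auto simp: mem_dominated)
    with assms(1) have "(s, v) \<in> (Restr E (V - {x}))\<^sup>*" by simp
    with assms(2) False show False by (auto simp: mem_dominated)
  qed
qed

lemma dominated_entry: "(u, v) \<in> E \<Longrightarrow> u \<notin> Dom x \<Longrightarrow> v \<in> Dom x \<Longrightarrow> v = x"
  using reach_avoiding_into_dominated[of u v x] arc_verts[of u v]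
  by (auto simp: mem_dominated)

lemma reach_avoiding_within_dominated:
  assumes "(w, v) \<in> (Restr E T)\<^sup>*" "T \<subseteq> V - {x}" "v \<in> Dom x"
  shows "(w, v) \<in> (Restr E (T \<inter> Dom x))\<^sup>*"
  using assms(1)
proof (induct rule: converse_rtrancl_induct)
  case (step a a')
  have "(a', v) \<in> (Restr E (V - {x}))\<^sup>*" "(a, v) \<in> (Restr E (V - {x}))\<^sup>*"
    using step(1,2) assms(2) rtrancl_Restr_mono[of _ v E T E "V - {x}"]
    by (auto intro: converse_rtrancl_into_rtrancl)
  with step(1) assms(2,3) have "a \<in> Dom x" "a' \<in> Dom x"
    by (auto intro: reach_avoiding_into_dominated)
  with step show ?case by (auto intro: converse_rtrancl_into_rtrancl)
qed simp

lemma dominated_trans: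
  assumes "c \<in> Dom x"
  shows "Dom c \<subseteq> Dom x"
proof
  fix v assume v: "v \<in> Dom c"
  show "v \<in> Dom x"
  proof (rule ccontr)
    assume nv: "v \<notin> Dom x"
    with v dominated_subset have sv: "(s, v) \<in> (Restr E (V - {x}))\<^sup>*" and "v \<noteq> x"
      by (auto simp: mem_dominated)
    with v nv have "c \<noteq> x" by auto
    with assms have sc: "(s, c) \<notin> (Restr E (V - {x}))\<^sup>*" by (auto simp: mem_dominated)
    then have "s \<noteq> c" by auto
    from rtrancl_Restr_first_visit[OF sv this] show False
    proof
      assume h: "(s, v) \<in> (Restr E (V - {x} - {c}))\<^sup>*"
      then have "(s, v) \<in> (Restr E (V - {c}))\<^sup>*" by (rule rtrancl_Restr_mono) auto
      moreover have "v \<noteq> c" using rtrancl_Restr_endpoints[OF h] \<open>s \<noteq> c\<close> by auto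
      ultimately show False using v by (auto simp: mem_dominated)
    next
      assume "\<exists>u. (s, u) \<in> (Restr E (V - {x} - {c}))\<^sup>* \<and> (u, c) \<in> Restr E (V - {x})"
      then obtain u where path: "(s, u) \<in> (Restr E (V - {x} - {c}))\<^sup>*"
        and step: "(u, c) \<in> Restr E (V - {x})"
        by blast
      from path have "(s, u) \<in> (Restr E (V - {x}))\<^sup>*" by (rule rtrancl_Restr_mono) auto
      with step have "(s, c) \<in> (Restr E (V - {x}))\<^sup>*" by (meson rtrancl.rtrancl_into_rtrancl)
      with sc show False by simp
    qed
  qed
qed

text \<open>Domination is antisymmetric: a vertex dominated by x is avoided by some path from s to x.\<close>
lemma reach_avoiding_dominated:
  assumes "x \<in> V" "y \<in> Dom x" "y \<noteq> x"
  shows "(s, x) \<in> (Restr E (V - {y}))\<^sup>*"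
proof (cases "x = s")
  case False
  have ny: "(s, y) \<notin> (Restr E (V - {x}))\<^sup>*" using assms by (auto simp: mem_dominated)
  then have "s \<noteq> y" by auto
  from False have "s \<noteq> x" by simp
  from rtrancl_Restr_first_visit[OF reach[OF assms(1)] this] show ?thesis
  proof (elim disjE exE conjE)
    assume "(s, x) \<in> (Restr E (V - {x}))\<^sup>*"
    with False show ?thesis using rtrancl_Restr_endpoints by fastforce
  next
    fix u assume su: "(s, u) \<in> (Restr E (V - {x}))\<^sup>*" and ux: "(u, x) \<in> Restr E V"
    from rtrancl_Restr_first_visit[OF su \<open>s \<noteq> y\<close>] show ?thesis
    proof
      assume h: "(s, u) \<in> (Restr E (V - {x} - {y}))\<^sup>*"
      then have "(s, u) \<in> (Restr E (V - {y}))\<^sup>*" by (rule rtrancl_Restr_mono) auto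
      moreover have "u \<noteq> y" using rtrancl_Restr_endpoints[OF h] \<open>s \<noteq> y\<close> by auto
      ultimately show ?thesis using ux assms(3) by (auto intro: rtrancl.rtrancl_into_rtrancl)
    next
      assume "\<exists>u'. (s, u') \<in> (Restr E (V - {x} - {y}))\<^sup>* \<and> (u', y) \<in> Restr E (V - {x})"
      then obtain u' where path: "(s, u') \<in> (Restr E (V - {x} - {y}))\<^sup>*"
        and step: "(u', y) \<in> Restr E (V - {x})"
        by blast
      from path have "(s, u') \<in> (Restr E (V - {x}))\<^sup>*" by (rule rtrancl_Restr_mono) auto
      with step have "(s, y) \<in> (Restr E (V - {x}))\<^sup>*" by (meson rtrancl.rtrancl_into_rtrancl)
      with ny show ?thesis by simp
    qed
  qed
qed simp

definition unique_dominated_succ :: "'a \<Rightarrow> 'a \<Rightarrow> bool" where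
  "unique_dominated_succ x c \<longleftrightarrow> c \<noteq> x \<and> (x, c) \<in> E \<and> c \<in> Dom x
     \<and> (\<forall>w. (x, w) \<in> E \<and> w \<in> Dom x \<longrightarrow> w = c)"

lemma unique_dominated_succ_dominates:
  assumes "unique_dominated_succ x c"
  shows "Dom x - {x} \<subseteq> Dom c"
proof
  fix v assume v: "v \<in> Dom x - {x}"
  show "v \<in> Dom c"
  proof (rule ccontr)
    assume "v \<notin> Dom c"
    with v dominated_subset have "(s, v) \<in> (Restr E (V - {c}))\<^sup>*" by (auto simp: mem_dominated)
    moreover have "v \<noteq> x" using v by simp
    ultimately have "(s, v) \<in> (Restr E (V - {c} - {x}))\<^sup>*
        \<or> (\<exists>w. (x, w) \<in> Restr E (V - {c}) \<and> (w, v) \<in> (Restr E (V - {c} - {x}))\<^sup>*)"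
      by (rule rtrancl_Restr_last_visit)
    then show False
    proof (elim disjE exE conjE)
      assume "(s, v) \<in> (Restr E (V - {c} - {x}))\<^sup>*"
      then have "(s, v) \<in> (Restr E (V - {x}))\<^sup>*" by (rule rtrancl_Restr_mono) auto
      with v show False by (auto simp: mem_dominated)
    next
      fix w assume xw: "(x, w) \<in> Restr E (V - {c})" and wv: "(w, v) \<in> (Restr E (V - {c} - {x}))\<^sup>*"
      from wv have "(w, v) \<in> (Restr E (V - {x}))\<^sup>*" by (rule rtrancl_Restr_mono) auto
      with v xw have "w \<in> Dom x" by (auto intro: reach_avoiding_into_dominated)
      with assms xw show False by (auto simp: unique_dominated_succ_def)
    qed
  qed
qed

lemma unique_dominated_succ_unique:
  "unique_dominated_succ x c \<Longrightarrow> unique_dominated_succ x c' \<Longrightarrow> c = c'"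
  by (auto simp: unique_dominated_succ_def)

text \<open>The tree path from s to u would have to pass w, whose unique tree parent is u itself.\<close>
lemma out_branching_arc_not_dominated:
  assumes T: "out_branching D s T" and uw: "(u, w) \<in> T"
  shows "u \<notin> Dom w"
proof
  assume ud: "u \<in> Dom w"
  have TE: "T \<subseteq> E" and ws: "w \<noteq> s" and paths: "\<forall>v \<in> V. \<exists>p. dpath (V, T) p s v"
    using T uw by (auto simp: out_branching_def)
  have uV: "u \<in> V" "w \<in> V" and uw_ne: "u \<noteq> w" using uw TE arc_verts no_loop by auto
  then have parent: "\<exists>!u. (u, w) \<in> T" using T ws by (auto simp: out_branching_def)
  obtain p where p: "dpath (V, T) p s u" using paths uV by auto
  have "w \<in> set p"
  proof (rule ccontr)
    assume "w \<notin> set p"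
    then have "(s, u) \<in> (Restr E (V - {w}))\<^sup>*"
      using p TE dpath_imp_rtrancl[of "(V, T)" p s u E "V - {w}"] by (auto simp: dpath_def)
    with ud uw_ne show False by (auto simp: mem_dominated)
  qed
  then obtain a where a: "a < length p" "p ! a = w" by (auto simp: in_set_conv_nth)
  have pd: "p \<noteq> []" "hd p = s" "last p = u" "distinct p"
    "\<forall>i. Suc i < length p \<longrightarrow> (p ! i, p ! Suc i) \<in> T" using p by (auto simp: dpath_def)
  have "a \<noteq> 0"
  proof
    assume "a = 0"
    with a pd ws show False by (simp add: hd_conv_nth)
  qed
  then have "(p ! (a - 1), w) \<in> T" using pd(5) a by (metis Suc_pred' gr0I)
  with parent uw have "p ! (a - 1) = p ! (length p - 1)" using pd by (auto simp: last_conv_nth)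
  then have "a - 1 = length p - 1" using pd(4) a by (simp add: nth_eq_iff_index_eq)
  with a \<open>a \<noteq> 0\<close> show False by simp
qed

text \<open>Any other arc into c starts outside Dom x, which is impossible, or inside
  Dom x - {x} \<subseteq> Dom c, which an out-branching forbids.\<close>
lemma unique_dominated_succ_in_out_branching:
  assumes c: "unique_dominated_succ x c" and T: "out_branching D s T"
  shows "(x, c) \<in> T"
proof -
  have TE: "T \<subseteq> E" using T by (auto simp: out_branching_def)
  have xc: "(x, c) \<in> E" "c \<in> Dom x" "c \<noteq> x" using c by (auto simp: unique_dominated_succ_def)
  then have "c \<noteq> s" "c \<in> V" by (auto simp: mem_dominated)
  then obtain u where u: "(u, c) \<in> T" using T by (auto simp: out_branching_def)
  then have uE: "(u, c) \<in> E" using TE by auto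
  have "u \<notin> Dom c" using out_branching_arc_not_dominated[OF T u] .
  moreover have "u \<in> Dom x" using dominated_entry[OF uE, of x] xc by auto
  ultimately have "u = x" using unique_dominated_succ_dominates[OF c] by auto
  with u show ?thesis by simp
qed

lemma reduced_back_arc_reach_avoiding:
  assumes red: "reduced_instance D s t k" and uw: "(u, w) \<in> E" and ud: "u \<in> Dom w"
  shows "(w, t) \<in> (Restr E (V - {u}))\<^sup>*"
proof -
  have "\<not> (\<exists>T. out_branching D s T \<and> (u, w) \<in> T)"
    using out_branching_arc_not_dominated ud by blast
  with red uw obtain T where "in_branching D t T" "(u, w) \<in> T"
    unfolding reduced_instance_def by blast
  with arc_verts[OF uw] show ?thesis by (blast intro: in_branching_arc_reach_avoiding)
qed

lemma diblock_dominated_subset: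
  assumes "x \<in> V"
  shows "diblock (induced D (Dom x)) x \<subseteq> Dom x"
  using assms unfolding diblock_def bireachable_def induced_eq_Restr
  by (auto simp: dpath_def mem_dominated)

lemma diblock_reach_avoiding:
  assumes "x \<in> V" "z \<in> diblock (induced D (Dom x)) x" "y \<noteq> z" "y \<noteq> x"
  shows "(x, z) \<in> (Restr E (V - {y}))\<^sup>*"
proof -
  let ?H = "induced D (Dom x)"
  have aH: "arcs ?H \<subseteq> E" and vH: "verts ?H \<subseteq> V" using dominated_subset by (auto simp: induced_eq_Restr)
  consider "z = x" | "(x, z) \<in> arcs ?H" | "bireachable ?H x z"
    using assms(2) unfolding diblock_def by auto
  then show ?thesis
  proof cases
    case 2
    then show ?thesis using assms dominated_subset by (auto simp: induced_eq_Restr)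
  next
    case 3
    then obtain p q where pq: "dpath ?H p x z" "dpath ?H q x z" "set p \<inter> set q \<subseteq> {x, z}"
      unfolding bireachable_def by blast
    then obtain r where r: "dpath ?H r x z" "y \<notin> set r" using assms(3,4) by blast
    then have "set r \<subseteq> V - {y}" using vH by (auto simp: dpath_def)
    with r aH show ?thesis by (blast intro: dpath_imp_rtrancl)
  qed simp
qed

text \<open>Cut the path from s at its last visit to x.\<close>
lemma reach_within_dominated_avoiding:
  assumes v: "v \<in> Dom x" "v \<noteq> x" and sv: "(s, v) \<in> (Restr E (V - {y}))\<^sup>*"
  shows "(x, v) \<in> (Restr E (Dom x - {y}))\<^sup>*"
  using rtrancl_Restr_last_visit[OF sv v(2)]
proof (elim disjE exE conjE)
  assume "(s, v) \<in> (Restr E (V - {y} - {x}))\<^sup>*"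
  then have "(s, v) \<in> (Restr E (V - {x}))\<^sup>*" by (rule rtrancl_Restr_mono) auto
  with v show ?thesis by (auto simp: mem_dominated)
next
  fix w assume xw: "(x, w) \<in> Restr E (V - {y})" and wv: "(w, v) \<in> (Restr E (V - {y} - {x}))\<^sup>*"
  have "(w, v) \<in> (Restr E ((V - {y} - {x}) \<inter> Dom x))\<^sup>*"
    using reach_avoiding_within_dominated[OF wv _ v(1)] by auto
  then have "(w, v) \<in> (Restr E (Dom x - {y}))\<^sup>*" by (rule rtrancl_Restr_mono) auto
  moreover have "w \<in> Dom x"
  proof -
    from wv have "(w, v) \<in> (Restr E (V - {x}))\<^sup>*" by (rule rtrancl_Restr_mono) auto
    with v xw show ?thesis by (auto intro: reach_avoiding_into_dominated)
  qed
  moreover have "x \<in> Dom x" using xw by (auto simp: mem_dominated)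
  ultimately show ?thesis using xw by (auto intro: converse_rtrancl_into_rtrancl)
qed

lemma Xset_subset_dominated:
  assumes x: "x \<in> V" and y: "y \<in> diblock (induced D (Dom x)) x" "y \<noteq> x"
  shows "Xset (induced D (Dom x)) x y \<subseteq> Dom y"
proof
  let ?H = "induced D (Dom x)" and ?B = "diblock (induced D (Dom x)) x"
  fix v assume "v \<in> Xset ?H x y"
  then have v: "v \<in> Dom x" "v \<notin> ?B"
    and last: "\<And>p. dpath ?H p x v \<Longrightarrow> last (filter (\<lambda>z. z \<in> ?B) p) = y"
    unfolding Xset_def by (auto simp: induced_eq_Restr)
  have xB: "x \<in> ?B" by (simp add: diblock_def)
  with v have "v \<noteq> x" by auto
  show "v \<in> Dom y"
  proof (rule ccontr)
    assume "v \<notin> Dom y"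
    with v dominated_subset have "(s, v) \<in> (Restr E (V - {y}))\<^sup>*" by (auto simp: mem_dominated)
    with v \<open>v \<noteq> x\<close> have "(x, v) \<in> (Restr E (Dom x - {y}))\<^sup>*"
      by (blast intro: reach_within_dominated_avoiding)
    moreover have "x \<in> Dom x - {y}" using x y(2) by (simp add: mem_dominated)
    ultimately obtain p where p: "dpath (Dom x - {y}, Restr E (Dom x - {y})) p x v"
      using rtrancl_imp_dpath by metis
    then have "dpath ?H p x v" by (rule dpath_mono) (auto simp: induced_eq_Restr)
    then have "last (filter (\<lambda>z. z \<in> ?B) p) = y" by (rule last)
    moreover have "filter (\<lambda>z. z \<in> ?B) p \<noteq> []" using p xB by (auto simp: dpath_def filter_empty_conv)
    then have "last (filter (\<lambda>z. z \<in> ?B) p) \<in> set p" using last_in_set by fastforce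
    ultimately show False using p by (auto simp: dpath_def)
  qed
qed

text \<open>Conversely, x cannot reach a vertex v of Dom y - {y} while avoiding y, since s reaches x
  while avoiding y; so every path from x to v passes y, and no vertex of the diblock follows y.\<close>
lemma dominated_subset_Xset:
  assumes x: "x \<in> V" and y: "y \<in> diblock (induced D (Dom x)) x" "y \<noteq> x"
  shows "Dom y - {y} \<subseteq> Xset (induced D (Dom x)) x y"
proof
  let ?H = "induced D (Dom x)" and ?B = "diblock (induced D (Dom x)) x"
  have aH: "arcs ?H \<subseteq> E" and vH: "verts ?H = Dom x" by (auto simp: induced_eq_Restr)
  have yD: "y \<in> Dom x" using diblock_dominated_subset[OF x] y by auto
  fix v assume v: "v \<in> Dom y - {y}"
  then have vD: "v \<in> Dom x" using dominated_trans[OF yD] by auto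
  have "(s, v) \<notin> (Restr E (V - {y}))\<^sup>*" using v by (auto simp: mem_dominated)
  then have not_reach: "(x, v) \<notin> (Restr E (V - {y}))\<^sup>*"
    using reach_avoiding_dominated[OF x yD y(2)] by (meson rtrancl_trans)
  then have vB: "v \<notin> ?B" using diblock_reach_avoiding[OF x _ _ y(2)] v by blast
  have "last (filter (\<lambda>z. z \<in> ?B) p) = y" if p: "dpath ?H p x v" for p
  proof -
    have avoid: "y \<in> set q" if "dpath ?H q a v" "(x, a) \<in> (Restr E (V - {y}))\<^sup>*" for q a
    proof (rule ccontr)
      assume "y \<notin> set q"
      then have "(a, v) \<in> (Restr E (V - {y}))\<^sup>*"
        using that(1) aH vH dominated_subset[of x] by (intro dpath_imp_rtrancl) (auto simp: dpath_def)
      with that(2) not_reach show False by (meson rtrancl_trans)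
    qed
    from avoid[OF p] obtain k where k: "k < length p" "p ! k = y" by (auto simp: in_set_conv_nth)
    have "p ! m \<notin> ?B" if m: "k < m" "m < length p" for m
    proof
      assume mB: "p ! m \<in> ?B"
      have "p ! m \<noteq> y" using m k p by (auto simp: dpath_def nth_eq_iff_index_eq)
      then have "(x, p ! m) \<in> (Restr E (V - {y}))\<^sup>*"
        using diblock_reach_avoiding[OF x mB _ y(2)] by auto
      moreover have "y \<notin> set (drop m p)"
        using distinct_nth_notin_drop[of p k m] p k m by (auto simp: dpath_def)
      ultimately show False using avoid[OF dpath_drop[OF p m(2)]] by blast
    qed
    with k y(1) show ?thesis by (auto intro: last_filter_eq_nth)
  qed
  with vD vB show "v \<in> Xset ?H x y" unfolding Xset_def by (simp add: induced_eq_Restr)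
qed

lemma Xset_insert_eq_dominated:
  assumes "x \<in> V" "y \<in> diblock (induced D (Dom x)) x" "y \<noteq> x"
  shows "Xset (induced D (Dom x)) x y \<union> {y} = Dom y"
  using Xset_subset_dominated[OF assms] dominated_subset_Xset[OF assms]
    diblock_dominated_subset[OF assms(1)] assms(2) dominated_subset
  by (auto simp: mem_dominated)

lemma induced_verts: "induced D V = D"
  using wf by (cases D) (auto simp: induced_def wf_digraph_def)

text \<open>The cut decomposition is the dominator tree.\<close>
lemma cd_node_eq_induced_dominated:
  "cd_node D s x H \<Longrightarrow> x \<in> V \<and> H = induced D (Dom x)"
proof (induct rule: cd_node.induct)
  case root
  then show ?case using root_in_verts dominated_root induced_verts by simp
next
  case (child x H y)
  then have x: "x \<in> V" and H: "H = induced D (Dom x)" by auto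
  have y: "y \<in> diblock H x" "y \<noteq> x" using child(3) by (auto simp: bottleneck_def)
  then have yD: "y \<in> Dom x" using diblock_dominated_subset[OF x] H by auto
  have "Xset H x y \<union> {y} = Dom y" using Xset_insert_eq_dominated[OF x] y H by auto
  moreover have "Dom y \<subseteq> Dom x" using dominated_trans[OF yD] .
  ultimately have "induced H (Xset H x y \<union> {y}) = induced D (Dom y)"
    using H by (auto simp: induced_eq_Restr)
  then show ?case using yD dominated_subset by auto
qed

text \<open>A degenerate diblock {x, y} leaves x with the single out-neighbour y inside Dom x.\<close>
lemma degenerate_unique_dominated_succ:
  assumes node: "cd_node D s x H" and y: "bottleneck H x y" and card: "card (diblock H x) = 2"
  shows "unique_dominated_succ x y"
proof -
  have H: "H = induced D (Dom x)" using cd_node_eq_induced_dominated[OF node] by simp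
  have yB: "y \<in> diblock H x" "y \<noteq> x" using y by (auto simp: bottleneck_def)
  have "diblock H x = {x, y}"
  proof -
    have "finite (diblock H x)" using card card.infinite by fastforce
    moreover have "{x, y} \<subseteq> diblock H x" using yB by (auto simp: diblock_def)
    ultimately show ?thesis using card yB by (metis card_2_iff card_subset_eq)
  qed
  moreover have "w \<in> diblock H x" "w \<noteq> x" if "(x, w) \<in> arcs H" for w
    using that no_loop H by (auto simp: diblock_def induced_eq_Restr)
  ultimately have succ: "w = y" if "(x, w) \<in> arcs H" for w
    using that by blast
  have "(x, y) \<in> arcs H"
  proof -
    consider "(x, y) \<in> arcs H" | "bireachable H x y" using yB unfolding diblock_def by auto
    then show ?thesis
    proof cases
      case 2
      then obtain p where p: "dpath H p x y" unfolding bireachable_def by blast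
      with yB(2) have "Suc 0 < length p"
        by (cases p) (auto simp: dpath_def split: if_splits)
      with p have "(x, p ! 1) \<in> arcs H" by (auto simp: dpath_def hd_conv_nth)
      with succ show ?thesis by auto
    qed
  qed
  with succ H yB(2) show ?thesis unfolding unique_dominated_succ_def by (auto simp: induced_eq_Restr)
qed

end

locale dominator_chain = rooted_digraph +
  fixes xs :: "'a list"
  assumes succ_exists: "i < length xs \<Longrightarrow> \<exists>c. unique_dominated_succ (xs ! i) c"
    and succ_next: "Suc i < length xs \<Longrightarrow> unique_dominated_succ (xs ! i) (xs ! Suc i)"

lemma (in rooted_digraph) degenerate_path_dominator_chain:
  assumes "degenerate_path D s xs"
  shows "dominator_chain D s xs"
proof unfold_locales
  fix i assume "i < length xs"
  with assms obtain H y where "cd_node D s (xs ! i) H" "bottleneck H (xs ! i) y" "card (diblock H (xs ! i)) = 2"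
    unfolding degenerate_path_def cd_degenerate_def by blast
  then show "\<exists>c. unique_dominated_succ (xs ! i) c" by (blast intro: degenerate_unique_dominated_succ)
next
  fix i assume i: "Suc i < length xs"
  with assms obtain H y where H: "cd_node D s (xs ! i) H" "bottleneck H (xs ! i) y"
      "card (diblock H (xs ! i)) = 2"
    unfolding degenerate_path_def cd_degenerate_def by (meson Suc_lessD)
  from i assms obtain G where G: "cd_node D s (xs ! i) G" "bottleneck G (xs ! i) (xs ! Suc i)"
    unfolding degenerate_path_def cd_child_def by blast
  have "G = H" using cd_node_eq_induced_dominated[OF G(1)] cd_node_eq_induced_dominated[OF H(1)] by simp
  with H G show "unique_dominated_succ (xs ! i) (xs ! Suc i)"
    by (blast intro: degenerate_unique_dominated_succ)
qed

context dominator_chain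
begin

lemma chain_mem_dominated: "i < length xs \<Longrightarrow> xs ! i \<in> Dom (xs ! i)"
  using succ_exists arc_verts by (fastforce simp: unique_dominated_succ_def mem_dominated)

lemma chain_dominated_antimono:
  assumes "i \<le> j" "j < length xs"
  shows "Dom (xs ! j) \<subseteq> Dom (xs ! i)"
  using assms
proof (induct j rule: dec_induct)
  case (step j)
  then have "xs ! Suc j \<in> Dom (xs ! j)" using succ_next by (auto simp: unique_dominated_succ_def)
  with step show ?case using dominated_trans by (meson Suc_lessD order_trans)
qed simp

lemma chain_not_dominated_by_later:
  assumes "i < j" "j < length xs"
  shows "xs ! i \<notin> Dom (xs ! j)"
proof
  assume "xs ! i \<in> Dom (xs ! j)"
  then have dom: "xs ! i \<in> Dom (xs ! Suc i)"
    using chain_dominated_antimono[of "Suc i" j] assms by auto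
  have succ: "unique_dominated_succ (xs ! i) (xs ! Suc i)" using succ_next assms by simp
  then have "(s, xs ! i) \<in> (Restr E (V - {xs ! Suc i}))\<^sup>*"
    using reach_avoiding_dominated arc_verts by (auto simp: unique_dominated_succ_def)
  with dom succ show False by (auto simp: mem_dominated unique_dominated_succ_def)
qed

text \<open>One arc per tail of A^0, namely the arc to the next vertex of the dominator tree; these
  arcs lie in every out-branching but can all be avoided by a single in-branching.\<close>
definition forced_arcs :: "('a \<times> 'a) set" where
  "forced_arcs = {(u, c). u \<in> A0_tails D xs \<and> unique_dominated_succ u c}"

lemma forced_arcs_subset_out_branching:
  "out_branching D s T \<Longrightarrow> forced_arcs \<subseteq> T"
  by (auto simp: forced_arcs_def intro: unique_dominated_succ_in_out_branching)

lemma card_forced_arcs: "card forced_arcs = card (A0_tails D xs)"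
proof (rule bij_betw_same_card)
  show "bij_betw fst forced_arcs (A0_tails D xs)"
    unfolding bij_betw_def
  proof
    show "inj_on fst forced_arcs"
      by (auto intro!: inj_onI simp: forced_arcs_def dest: unique_dominated_succ_unique)
    show "fst ` forced_arcs = A0_tails D xs"
      using succ_exists by (force simp: forced_arcs_def A0_tails_def)
  qed
qed

text \<open>If some vertex could not reach t without forced arcs, take the first index j0 of a vertex
  that is the tail of a backward arc (xs ! j0, xs ! i0) and is stuck in this sense. By reducedness
  that arc lies in an in-branching, so xs ! i0 reaches t avoiding xs ! j0; the last stuck vertex on
  that path is again such a tail, hence lies in Dom (xs ! j0), which cannot be entered without
  passing xs ! j0.\<close>
lemma reach_avoiding_forced_arcs:
  assumes red: "reduced_instance D s t k" and v: "v \<in> V"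
  shows "(v, t) \<in> (E - forced_arcs)\<^sup>*"
proof (rule ccontr)
  define stuck where "stuck z \<longleftrightarrow> (z, t) \<notin> (E - forced_arcs)\<^sup>*" for z
  define J where "J = {j. j < length xs \<and> (\<exists>i<j. (xs ! j, xs ! i) \<in> E) \<and> stuck (xs ! j)}"
  have exit: "\<exists>j \<in> J. (a, xs ! j) \<in> R\<^sup>*"
    if at: "(a, t) \<in> R\<^sup>*" and RE: "R \<subseteq> E" and a: "stuck a" for a R
  proof -
    obtain u w where uw: "(a, u) \<in> R\<^sup>*" "(u, w) \<in> R" "stuck u" "\<not> stuck w"
      using rtrancl_crossing_step[OF at, of stuck] a by (auto simp: stuck_def)
    then have "(u, w) \<in> forced_arcs"
      using RE by (auto simp: stuck_def intro: converse_rtrancl_into_rtrancl)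
    with uw(1,3) show ?thesis by (auto simp: forced_arcs_def A0_tails_def J_def)
  qed
  assume "(v, t) \<notin> (E - forced_arcs)\<^sup>*"
  moreover obtain T where "in_branching D t T" using red unfolding reduced_instance_def by blast
  then have "(v, t) \<in> E\<^sup>*" using v by (rule in_branching_reaches)
  ultimately obtain j where "j \<in> J" using exit[of v E] by (auto simp: stuck_def)
  define j0 where "j0 = (LEAST j. j \<in> J)"
  have "j0 \<in> J" and j0_least: "\<And>j. j \<in> J \<Longrightarrow> j0 \<le> j"
    unfolding j0_def using \<open>j \<in> J\<close> by (auto intro: LeastI Least_le)
  then obtain i0 where i0: "i0 < j0" "j0 < length xs" "(xs ! j0, xs ! i0) \<in> E" "stuck (xs ! j0)"
    by (auto simp: J_def)
  have i0_out: "xs ! i0 \<notin> Dom (xs ! j0)" using chain_not_dominated_by_later i0 by simp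
  have "stuck (xs ! i0)"
  proof -
    have "(xs ! j0, xs ! i0) \<notin> forced_arcs"
      using i0_out by (auto simp: forced_arcs_def unique_dominated_succ_def)
    with i0(3,4) show ?thesis by (auto simp: stuck_def intro: converse_rtrancl_into_rtrancl)
  qed
  moreover have "xs ! j0 \<in> Dom (xs ! i0)"
    using chain_mem_dominated[of j0] chain_dominated_antimono[of i0 j0] i0 by auto
  then have "(xs ! i0, t) \<in> (Restr E (V - {xs ! j0}))\<^sup>*"
    using reduced_back_arc_reach_avoiding[OF red i0(3)] by simp
  ultimately obtain q where q: "q \<in> J" and reach_q: "(xs ! i0, xs ! q) \<in> (Restr E (V - {xs ! j0}))\<^sup>*"
    using exit[of "xs ! i0" "Restr E (V - {xs ! j0})"] by auto
  have "xs ! q \<in> Dom (xs ! j0)"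
    using j0_least[OF q] q chain_mem_dominated[of q] chain_dominated_antimono[of j0 q] by (auto simp: J_def)
  moreover have "xs ! i0 \<in> V" using arc_verts i0(3) by blast
  ultimately have "xs ! i0 \<in> Dom (xs ! j0)" using reach_q by (rule reach_avoiding_into_dominated[rotated])
  with i0_out show False by contradiction
qed

end

theorem lemma17:
  fixes D :: "'a dg" and s t :: 'a and k :: int and xs :: "'a list"
  assumes "wf_digraph D" and "s \<in> verts D" and "t \<in> verts D"
    and "reduced_instance D s t k"
    and "degenerate_path D s xs"
    and "t \<notin> set xs"
    and "\<not> positive_instance D s t k"
  shows "int (card (A0_tails D xs)) < k"
proof -
  obtain Tp where Tp: "out_branching D s Tp" using assms(4) unfolding reduced_instance_def by blast
  interpret rooted_digraph D s using assms(1,2) out_branching_reaches[OF Tp] by unfold_locales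
  interpret dominator_chain D s xs using degenerate_path_dominator_chain[OF assms(5)] .
  have "E \<subseteq> V \<times> V" using assms(1) by (simp add: wf_digraph_def)
  with in_branching_exists[OF Diff_subset this assms(3) reach_avoiding_forced_arcs[OF assms(4)]]
  obtain Tm where Tm: "Tm \<subseteq> E - forced_arcs" "in_branching D t Tm"
    by blast
  have "Tp \<subseteq> E" using Tp unfolding out_branching_def by blast
  then have "finite (Tp - Tm)" using finite_arcs by (meson finite_Diff finite_subset)
  moreover have "forced_arcs \<subseteq> Tp - Tm" using forced_arcs_subset_out_branching[OF Tp] Tm(1) by auto
  ultimately have "card (A0_tails D xs) \<le> card (Tp - Tm)"
    using card_forced_arcs card_mono by metis
  moreover have "int (card (Tp - Tm)) < k"
    using Tp Tm(2) assms(7) unfolding positive_instance_def by (meson not_le)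
  ultimately show ?thesis by linarith
qed

end
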